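(* In the game $\mathrm{CN}(7,4)$, if $\mathbf p\in S$ and $\mathbf p'$ is obtained from $\mathbf p$ by a legal move, then $\mathbf p'\notin S$. Here $S=S_1\cup S_2\cup S_3\cup S_4$ where, writing a position as $(a,b,c,d,e,f,g)$ with $a$ a minimum entry, $S_1=\{a=b=0,\ c=g>0,\ d+e+f=c\}$, $S_2=\{a=b=c=d=e=f=g\}$, $S_3=\{a=b,\ c=g,\ d=f,\ a+c=d+e,\ 0<a<e\}$, $S_4=\{a=f,\ b+c=d+e=g+a,\ a<\min\{b,e\},\ a<\max\{c,d\}\}$.
   Context: Circular Nim $\mathrm{CN}(7,4)$: $7$ stacks of tokens are arranged in a circle; a position is a vector $(p_1,\dots,p_7)$ of nonnegative integers giving the stack heights in order around the circle, determined only up to rotation and reflection. A legal move consists of choosing $4$ cyclically consecutive stacks and removing at least one token from at least one of these $4$ stacks (any number from each chosen stack; other stacks unchanged). A position belongs to $S_i$ if some rotation and/or reflection $(a,b,c,d,e,f,g)$ of it with $a$ equal to the minimum entry satisfies the conditions defining $S_i$. *)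

theory Defs
  imports Main
begin

text \<open>A position of CN(7,4) is a list of 7 stack heights, read cyclically.
  Positions are considered up to rotation and reflection.\<close>

definition is_position :: "nat list \<Rightarrow> bool" where
  "is_position p \<longleftrightarrow> length p = 7"

definition dihedral_images :: "nat list \<Rightarrow> nat list set" where
  "dihedral_images p = {rotate k p | k. k < 7} \<union> {rev (rotate k p) | k. k < 7}"

definition S1 :: "nat list \<Rightarrow> bool" where
  "S1 q \<longleftrightarrow> (let a = q!0; b = q!1; c = q!2; d = q!3; e = q!4; f = q!5; g = q!6 in
     a = 0 \<and> b = 0 \<and> c = g \<and> c > 0 \<and> d + e + f = c)"

definition S2 :: "nat list \<Rightarrow> bool" where
  "S2 q \<longleftrightarrow> (let a = q!0; b = q!1; c = q!2; d = q!3; e = q!4; f = q!5; g = q!6 in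
     a = b \<and> b = c \<and> c = d \<and> d = e \<and> e = f \<and> f = g)"

definition S3 :: "nat list \<Rightarrow> bool" where
  "S3 q \<longleftrightarrow> (let a = q!0; b = q!1; c = q!2; d = q!3; e = q!4; f = q!5; g = q!6 in
     a = b \<and> c = g \<and> d = f \<and> a + c = d + e \<and> 0 < a \<and> a < e)"

definition S4 :: "nat list \<Rightarrow> bool" where
  "S4 q \<longleftrightarrow> (let a = q!0; b = q!1; c = q!2; d = q!3; e = q!4; f = q!5; g = q!6 in
     a = f \<and> b + c = d + e \<and> d + e = g + a \<and> a < min b e \<and> a < max c d)"

definition in_S :: "nat list \<Rightarrow> bool" where
  "in_S p \<longleftrightarrow> (\<exists>q \<in> dihedral_images p. q!0 = Min (set q) \<and>
                   (S1 q \<or> S2 q \<or> S3 q \<or> S4 q))"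

definition window :: "nat \<Rightarrow> nat set" where
  "window i = {(i + k) mod 7 | k. k < 4}"

definition legal_move :: "nat list \<Rightarrow> nat list \<Rightarrow> bool" where
  "legal_move p p' \<longleftrightarrow> length p = 7 \<and> length p' = 7 \<and>
     (\<exists>i < 7. (\<forall>j < 7. j \<notin> window i \<longrightarrow> p' ! j = p ! j) \<and>
              (\<forall>j < 7. p' ! j \<le> p ! j) \<and> p' \<noteq> p)"

end

theory Submission
  imports Defs
begin

text \<open>Both \<open>S\<close> and the move relation are invariant under the dihedral group of the 7-cycle,
  so we may assume that the starting position is itself a normal form: it lists a minimal
  entry first and satisfies one of the conditions \<open>S\<^sub>1\<close>--\<open>S\<^sub>4\<close> literally. A move
  leaves three cyclically consecutive stacks untouched, lowers none and lowers the total. For each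
  of the four kinds of normal form, each of the seven possible untouched triples and each of the
  fourteen ways to read the successor as a normal form, the resulting linear constraints on the
  fourteen stack heights are infeasible.\<close>

lemma list_length_7_cases:
  assumes "length xs = 7"
  obtains a b c d e f g where "xs = [a, b, c, d, e, f, g]"
  using assms by (auto simp: numeral_eq_Suc length_Suc_conv)

lemma less_7_iff: "(k::nat) < 7 \<longleftrightarrow> k \<in> {0, 1, 2, 3, 4, 5, 6}"
  by auto

lemma ex_less_7: "(\<exists>i<7. P i) \<longleftrightarrow> P 0 \<or> P 1 \<or> P 2 \<or> P 3 \<or> P 4 \<or> P 5 \<or> P (6::nat)"
  unfolding less_7_iff by blast

lemma all_less_7: "(\<forall>i<7. P i) \<longleftrightarrow> P 0 \<and> P 1 \<and> P 2 \<and> P 3 \<and> P 4 \<and> P 5 \<and> P (6::nat)"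
  unfolding less_7_iff by blast

lemma dihedral_images_7:
  "dihedral_images [a, b, c, d, e, f, g] =
     {[a, b, c, d, e, f, g], [b, c, d, e, f, g, a], [c, d, e, f, g, a, b], [d, e, f, g, a, b, c],
      [e, f, g, a, b, c, d], [f, g, a, b, c, d, e], [g, a, b, c, d, e, f],
      [g, f, e, d, c, b, a], [a, g, f, e, d, c, b], [b, a, g, f, e, d, c], [c, b, a, g, f, e, d],
      [d, c, b, a, g, f, e], [e, d, c, b, a, g, f], [f, e, d, c, b, a, g]}"
  unfolding dihedral_images_def less_7_iff Setcompr_eq_image image_insert
  by (simp add: numeral_eq_Suc insert_commute)

lemma dihedral_images_rotate1:
  assumes "length p = 7"
  shows "dihedral_images (rotate1 p) = dihedral_images p"
proof -
  obtain a b c d e f g where "p = [a, b, c, d, e, f, g]"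
    using assms by (rule list_length_7_cases)
  then show ?thesis
    by (simp add: dihedral_images_7 insert_commute)
qed

lemma dihedral_images_rev:
  assumes "length p = 7"
  shows "dihedral_images (rev p) = dihedral_images p"
proof -
  obtain a b c d e f g where "p = [a, b, c, d, e, f, g]"
    using assms by (rule list_length_7_cases)
  then show ?thesis
    by (simp add: dihedral_images_7 insert_commute)
qed

lemma dihedral_images_rotate:
  assumes "length p = 7"
  shows "dihedral_images (rotate k p) = dihedral_images p"
  using assms by (induction k) (simp_all add: dihedral_images_rotate1)

lemma dihedral_images_of_image:
  assumes "length p = 7" and "q \<in> dihedral_images p"
  shows "dihedral_images q = dihedral_images p"
proof -
  from assms(2) obtain k where "q = rotate k p \<or> q = rev (rotate k p)"
    unfolding dihedral_images_def by blast
  with assms(1) show ?thesis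
    by (auto simp: dihedral_images_rotate dihedral_images_rev)
qed

lemma window_eq: "window i = {i mod 7, (i + 1) mod 7, (i + 2) mod 7, (i + 3) mod 7}"
proof -
  have "window i = (\<lambda>k. (i + k) mod 7) ` {..<4}"
    unfolding window_def by blast
  also have "{..<4::nat} = {0, 1, 2, 3}"
    by auto
  finally show ?thesis
    by simp
qed

lemma legal_move_iff:
  "legal_move p p' \<longleftrightarrow> length p = 7 \<and> length p' = 7 \<and>
     (\<exists>i<7. \<forall>j<7. j \<notin> window i \<longrightarrow> p' ! j = p ! j) \<and> (\<forall>j<7. p' ! j \<le> p ! j) \<and> p' \<noteq> p"
  unfolding legal_move_def by blast

lemma legal_move_length:
  assumes "legal_move p p'"
  shows "length p = 7" and "length p' = 7"
  using assms unfolding legal_move_iff by blast+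

lemma legal_move_7_iff:
  "legal_move [a, b, c, d, e, f, g] [a', b', c', d', e', f', g'] \<longleftrightarrow>
     (a' \<le> a \<and> b' \<le> b \<and> c' \<le> c \<and> d' \<le> d \<and> e' \<le> e \<and> f' \<le> f \<and> g' \<le> g) \<and>
     a' + b' + c' + d' + e' + f' + g' < a + b + c + d + e + f + g \<and>
     \<comment> \<open>the three consecutive stacks outside the chosen window are unchanged\<close>
     ((e' = e \<and> f' = f \<and> g' = g) \<or> (a' = a \<and> f' = f \<and> g' = g) \<or> (a' = a \<and> b' = b \<and> g' = g) \<or>
      (a' = a \<and> b' = b \<and> c' = c) \<or> (b' = b \<and> c' = c \<and> d' = d) \<or> (c' = c \<and> d' = d \<and> e' = e) \<or>
      (d' = d \<and> e' = e \<and> f' = f))"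
  (is "_ \<longleftrightarrow> ?le \<and> ?sum \<and> ?fixed")
proof -
  let ?p = "[a, b, c, d, e, f, g]" and ?p' = "[a', b', c', d', e', f', g']"
  have le: "(\<forall>j<7. ?p' ! j \<le> ?p ! j) \<longleftrightarrow> ?le"
    by (simp add: all_less_7)
  have fixed: "(\<exists>i<7. \<forall>j<7. j \<notin> window i \<longrightarrow> ?p' ! j = ?p ! j) \<longleftrightarrow> ?fixed"
    by (simp add: ex_less_7 all_less_7 window_eq)
  have decrease: "?p' \<noteq> ?p \<longleftrightarrow> ?sum" if ?le
    using that by auto
  have "length ?p = 7" and "length ?p' = 7"
    by simp_all
  with decrease show ?thesis
    unfolding legal_move_iff le fixed by argo
qed

lemma legal_move_rotate1:
  assumes "legal_move p p'"
  shows "legal_move (rotate1 p) (rotate1 p')"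
proof -
  obtain a b c d e f g where p: "p = [a, b, c, d, e, f, g]"
    using legal_move_length(1)[OF assms] by (rule list_length_7_cases)
  obtain a' b' c' d' e' f' g' where p': "p' = [a', b', c', d', e', f', g']"
    using legal_move_length(2)[OF assms] by (rule list_length_7_cases)
  show ?thesis
    using assms unfolding p p' rotate1.simps append.simps legal_move_7_iff
    by (simp only: add.assoc add.commute add.left_commute) argo
qed

lemma legal_move_rev:
  assumes "legal_move p p'"
  shows "legal_move (rev p) (rev p')"
proof -
  obtain a b c d e f g where p: "p = [a, b, c, d, e, f, g]"
    using legal_move_length(1)[OF assms] by (rule list_length_7_cases)
  obtain a' b' c' d' e' f' g' where p': "p' = [a', b', c', d', e', f', g']"
    using legal_move_length(2)[OF assms] by (rule list_length_7_cases)
  show ?thesis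
    using assms unfolding p p' rev.simps append.simps legal_move_7_iff
    by (simp only: add.assoc add.commute add.left_commute) argo
qed

lemma legal_move_rotate:
  assumes "legal_move p p'"
  shows "legal_move (rotate k p) (rotate k p')"
  using assms by (induction k) (simp_all add: legal_move_rotate1)

lemma legal_move_dihedral_image:
  assumes "legal_move p p'" and "q \<in> dihedral_images p"
  obtains q' where "q' \<in> dihedral_images p'" and "legal_move q q'"
proof -
  from assms(2) obtain k where "k < 7" and "q = rotate k p \<or> q = rev (rotate k p)"
    unfolding dihedral_images_def by blast
  then show ?thesis
    using that legal_move_rotate[OF assms(1)] legal_move_rev[OF legal_move_rotate[OF assms(1)]]
    unfolding dihedral_images_def by blast
qed

definition S_normal :: "nat list \<Rightarrow> bool" where
  "S_normal q \<longleftrightarrow> q ! 0 = Min (set q) \<and> (S1 q \<or> S2 q \<or> S3 q \<or> S4 q)"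

lemma in_S_iff_S_normal_image: "in_S p \<longleftrightarrow> (\<exists>q\<in>dihedral_images p. S_normal q)"
  unfolding in_S_def S_normal_def ..

lemma in_S_dihedral_image:
  assumes "length p = 7" and "q \<in> dihedral_images p"
  shows "in_S q \<longleftrightarrow> in_S p"
  unfolding in_S_iff_S_normal_image dihedral_images_of_image[OF assms] ..

lemma S_normal_7_iff:
  "S_normal [a, b, c, d, e, f, g] \<longleftrightarrow>
     (a \<le> b \<and> a \<le> c \<and> a \<le> d \<and> a \<le> e \<and> a \<le> f \<and> a \<le> g) \<and>
     ((a = 0 \<and> b = 0 \<and> c = g \<and> 0 < c \<and> d + e + f = c) \<or>
      (a = b \<and> b = c \<and> c = d \<and> d = e \<and> e = f \<and> f = g) \<or>
      (a = b \<and> c = g \<and> d = f \<and> a + c = d + e \<and> 0 < a \<and> a < e) \<or>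
      (a = f \<and> b + c = d + e \<and> d + e = g + a \<and> a < b \<and> a < e \<and> (a < c \<or> a < d)))"
  (is "_ \<longleftrightarrow> ?min \<and> ?cases")
proof -
  have "[a, b, c, d, e, f, g] ! 0 = Min (set [a, b, c, d, e, f, g]) \<longleftrightarrow> ?min"
    by (subst eq_Min_iff) simp_all
  moreover have "S1 [a, b, c, d, e, f, g] \<or> S2 [a, b, c, d, e, f, g] \<or> S3 [a, b, c, d, e, f, g] \<or>
      S4 [a, b, c, d, e, f, g] \<longleftrightarrow> ?cases"
    unfolding S1_def S2_def S3_def S4_def Let_def by (simp add: less_max_iff_disj)
  ultimately show ?thesis
    unfolding S_normal_def by (simp only:)
qed

lemma in_S_7_iff:
  "in_S [a, b, c, d, e, f, g] \<longleftrightarrow>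
     S_normal [a, b, c, d, e, f, g] \<or> S_normal [b, c, d, e, f, g, a] \<or> S_normal [c, d, e, f, g, a, b] \<or>
     S_normal [d, e, f, g, a, b, c] \<or> S_normal [e, f, g, a, b, c, d] \<or> S_normal [f, g, a, b, c, d, e] \<or>
     S_normal [g, a, b, c, d, e, f] \<or> S_normal [g, f, e, d, c, b, a] \<or> S_normal [a, g, f, e, d, c, b] \<or>
     S_normal [b, a, g, f, e, d, c] \<or> S_normal [c, b, a, g, f, e, d] \<or> S_normal [d, c, b, a, g, f, e] \<or>
     S_normal [e, d, c, b, a, g, f] \<or> S_normal [f, e, d, c, b, a, g]"
  unfolding in_S_iff_S_normal_image dihedral_images_7
  by (simp only: bex_simps insert_iff empty_iff simp_thms)

lemma S_normal_cases:
  assumes "length q = 7" and "S_normal q"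
  obtains (S1) c d e f where "q = [0, 0, c, d, e, f, c]" and "0 < c" and "d + e + f = c"
  | (S2) a where "q = [a, a, a, a, a, a, a]"
  | (S3) a c d e where "q = [a, a, c, d, e, d, c]" and "a \<le> c" and "a \<le> d"
      and "a + c = d + e" and "0 < a" and "a < e"
  | (S4) a b c d e g where "q = [a, b, c, d, e, a, g]" and "a \<le> c" and "a \<le> d" and "a \<le> g"
      and "b + c = d + e" and "d + e = g + a" and "a < b" and "a < e" and "a < c \<or> a < d"
proof -
  obtain a b c d e f g where q: "q = [a, b, c, d, e, f, g]"
    using assms(1) by (rule list_length_7_cases)
  from assms(2)[unfolded q S_normal_7_iff] show ?thesis
    using S1[of c d e f] S2[of a] S3[of a c d e] S4[of a b c d e g] unfolding q by auto
qed

lemma no_move_from_S1_into_S: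
  assumes "legal_move [0, 0, c, d, e, f, c] q'"
    and "0 < c" and "d + e + f = c"
  shows "\<not> in_S q'"
proof
  obtain a' b' c' d' e' f' g' where q': "q' = [a', b', c', d', e', f', g']"
    using legal_move_length(2)[OF assms(1)] by (rule list_length_7_cases)
  assume "in_S q'"
  with assms show False
    unfolding q' in_S_7_iff S_normal_7_iff legal_move_7_iff
    by (elim conjE disjE; linarith)
qed

lemma no_move_from_S2_into_S:
  assumes "legal_move [a, a, a, a, a, a, a] q'"
  shows "\<not> in_S q'"
proof
  obtain a' b' c' d' e' f' g' where q': "q' = [a', b', c', d', e', f', g']"
    using legal_move_length(2)[OF assms(1)] by (rule list_length_7_cases)
  assume "in_S q'"
  with assms show False
    unfolding q' in_S_7_iff S_normal_7_iff legal_move_7_iff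
    by (elim conjE disjE; linarith)
qed

lemma no_move_from_S3_into_S:
  assumes "legal_move [a, a, c, d, e, d, c] q'"
    and "a \<le> c" and "a \<le> d" and "a + c = d + e" and "0 < a" and "a < e"
  shows "\<not> in_S q'"
proof
  obtain a' b' c' d' e' f' g' where q': "q' = [a', b', c', d', e', f', g']"
    using legal_move_length(2)[OF assms(1)] by (rule list_length_7_cases)
  assume "in_S q'"
  with assms show False
    unfolding q' in_S_7_iff S_normal_7_iff legal_move_7_iff
    by (elim conjE disjE; linarith)
qed

lemma no_move_from_S4_into_S:
  assumes "legal_move [a, b, c, d, e, a, g] q'"
    and "a \<le> c" and "a \<le> d" and "a \<le> g" and "b + c = d + e" and "d + e = g + a"
    and "a < b" and "a < e" and "a < c \<or> a < d"
  shows "\<not> in_S q'"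
proof
  obtain a' b' c' d' e' f' g' where q': "q' = [a', b', c', d', e', f', g']"
    using legal_move_length(2)[OF assms(1)] by (rule list_length_7_cases)
  assume "in_S q'"
  with assms show False
    unfolding q' in_S_7_iff S_normal_7_iff legal_move_7_iff
    by (elim conjE disjE; linarith)
qed

lemma S_normal_move_not_in_S:
  assumes "S_normal q" and "legal_move q q'"
  shows "\<not> in_S q'"
  using legal_move_length(1)[OF assms(2)] assms(1)
proof (cases rule: S_normal_cases)
  case (S1 c d e f)
  from assms(2)[unfolded S1(1)] S1(2,3) show ?thesis
    by (rule no_move_from_S1_into_S)
next
  case (S2 a)
  from assms(2)[unfolded S2(1)] show ?thesis
    by (rule no_move_from_S2_into_S)
next
  case (S3 a c d e)
  from assms(2)[unfolded S3(1)] S3(2-6) show ?thesis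
    by (rule no_move_from_S3_into_S)
next
  case (S4 a b c d e g)
  from assms(2)[unfolded S4(1)] S4(2-9) show ?thesis
    by (rule no_move_from_S4_into_S)
qed

theorem proposition1:
  fixes p p' :: "nat list"
  assumes "is_position p"
    and "in_S p"
    and "legal_move p p'"
  shows "\<not> in_S p'"
proof
  assume "in_S p'"
  from \<open>in_S p\<close> obtain q where "q \<in> dihedral_images p" and "S_normal q"
    unfolding in_S_iff_S_normal_image by blast
  from assms(3) \<open>q \<in> dihedral_images p\<close> obtain q' where "q' \<in> dihedral_images p'" and "legal_move q q'"
    by (rule legal_move_dihedral_image)
  with \<open>in_S p'\<close> have "in_S q'"
    using in_S_dihedral_image legal_move_length(2)[OF assms(3)] by blast
  with \<open>S_normal q\<close> \<open>legal_move q q'\<close> show False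
    using S_normal_move_not_in_S by blast
qed

end
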